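(* Let $G\subset\mathrm{SL}(2,\mathbb{C})$ be a finite subgroup and let $P\in\mathbb{C}[x,y]$. The following are equivalent: (1) $P(0,0)=0$ and $g\cdot P=P$ for all $g\in G$; (2) there exists an endomorphism $F=(f_1,f_2)$ of $\mathbb{A}^2$ with $g\cdot F=F$ for all $g\in G$ and $f_1y-f_2x=P$.
   Context: $\mathrm{SL}(2,\mathbb{C})$ acts on $\mathbb{C}[x,y]$ by $g\cdot P=P\circ g^{-1}$ and on $\mathrm{End}(\mathbb{A}^2)=\mathbb{C}[x,y]\times\mathbb{C}[x,y]$ by $g\cdot F=g\circ F\circ g^{-1}$, where $g$ is viewed as a linear automorphism of $\mathbb{A}^2$ and $F=(f_1,f_2)$ means $F(x,y)=(f_1(x,y),f_2(x,y))$. *)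

theory Defs
  imports "HOL-Analysis.Analysis" "HOL-Computational_Algebra.Polynomial"
begin

text \<open>C[x,y] is represented as C[x][y]: a polynomial in y whose coefficients are
polynomials in x.\<close>
type_synonym bipoly = "complex poly poly"

definition bconst :: "complex \<Rightarrow> bipoly" where "bconst c = [:[:c:]:]"
definition bX :: bipoly where "bX = [:[:0, 1:]:]"
definition bY :: bipoly where "bY = [:0, 1:]"

definition beval :: "bipoly \<Rightarrow> complex \<Rightarrow> complex \<Rightarrow> complex" where
  "beval P a b = poly (poly P [:b:]) a"

definition bsubst :: "bipoly \<Rightarrow> bipoly \<Rightarrow> bipoly \<Rightarrow> bipoly" where
  "bsubst P u v = poly (map_poly (\<lambda>q. poly (map_poly bconst q) u) P) v"

definition lin_comp :: "bipoly \<Rightarrow> complex^2^2 \<Rightarrow> bipoly" where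
  "lin_comp P h = bsubst P (bconst (h$1$1) * bX + bconst (h$1$2) * bY)
                           (bconst (h$2$1) * bX + bconst (h$2$2) * bY)"

definition act_poly :: "complex^2^2 \<Rightarrow> bipoly \<Rightarrow> bipoly" where
  "act_poly g P = lin_comp P (matrix_inv g)"

text \<open>g \<cdot> F = g \<circ> F \<circ> g^{-1}, F = (f1, f2).\<close>
definition act_end :: "complex^2^2 \<Rightarrow> bipoly \<times> bipoly \<Rightarrow> bipoly \<times> bipoly" where
  "act_end g F = (let h = matrix_inv g; f1 = lin_comp (fst F) h; f2 = lin_comp (snd F) h in
     (bconst (g$1$1) * f1 + bconst (g$1$2) * f2, bconst (g$2$1) * f1 + bconst (g$2$2) * f2))"

definition SL2 :: "(complex^2^2) set" where "SL2 = {g. det g = 1}"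

definition finite_subgroup_SL2 :: "(complex^2^2) set \<Rightarrow> bool" where
  "finite_subgroup_SL2 G \<longleftrightarrow> finite G \<and> G \<subseteq> SL2 \<and> mat 1 \<in> G \<and>
     (\<forall>g\<in>G. \<forall>h\<in>G. g ** h \<in> G) \<and> (\<forall>g\<in>G. matrix_inv g \<in> G)"

end

theory Submission
  imports Defs
begin

text \<open>Evaluated at a point v, the action on endomorphisms is (g \<cdot> F)(v) = g F(g\<inverse> v), and
  f1 y - f2 x evaluated at v is the determinant of the columns F(v) and v. As det g = 1, the
  map F \<mapsto> f1 y - f2 x is therefore G-equivariant, which gives (2) \<Longrightarrow> (1). Conversely, if
  P(0,0) = 0 then P = x A + y B = f1 y - f2 x for F = (B, -A), and averaging F over the finite
  group G yields an invariant endomorphism whose image under the equivariant map is the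
  average of the g \<cdot> P, which is P itself.\<close>

lemma beval_add [simp]: "beval (P + Q) a b = beval P a b + beval Q a b"
  by (simp add: beval_def)

lemma beval_diff [simp]: "beval (P - Q) a b = beval P a b - beval Q a b"
  by (simp add: beval_def)

lemma beval_mult [simp]: "beval (P * Q) a b = beval P a b * beval Q a b"
  by (simp add: beval_def)

lemma beval_zero [simp]: "beval 0 a b = 0"
  by (simp add: beval_def)

lemma beval_sum [simp]: "beval (sum f S) a b = (\<Sum>i\<in>S. beval (f i) a b)"
  by (induction S rule: infinite_finite_induct) auto

lemma beval_bconst [simp]: "beval (bconst c) a b = c"
  by (simp add: beval_def bconst_def)

lemma beval_bX [simp]: "beval bX a b = a"
  by (simp add: beval_def bX_def)

lemma beval_bY [simp]: "beval bY a b = b"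
  by (simp add: beval_def bY_def)

lemma bconst_0 [simp]: "bconst 0 = 0"
  by (simp add: bconst_def)

lemma bipoly_eqI:
  assumes "\<And>a b. beval P a b = beval Q a b"
  shows "P = Q"
proof -
  have roots: "poly (P - Q) [:b:] = 0" for b
    using assms poly_all_0_iff_0[of "poly (P - Q) [:b:]"] by (auto simp: beval_def)
  have "infinite (range (\<lambda>b::complex. [:b:]))"
    using infinite_UNIV_char_0 finite_imageD[of "\<lambda>b::complex. [:b:]" UNIV]
    by (auto simp: inj_on_def)
  moreover have "range (\<lambda>b. [:b:]) \<subseteq> {x. poly (P - Q) x = 0}"
    using roots by auto
  ultimately have "infinite {x. poly (P - Q) x = 0}"
    using infinite_super by blast
  then have "P - Q = 0"
    using poly_roots_finite by blast
  then show ?thesis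
    by simp
qed

lemma beval_poly_map_bconst:
  "beval (poly (map_poly bconst c) u) a b = poly c (beval u a b)"
  by (induction c) (simp_all add: map_poly_pCons)

lemma beval_bsubst:
  "beval (bsubst P u v) a b = beval P (beval u a b) (beval v a b)"
proof (induction P)
  case 0
  then show ?case
    by (simp add: bsubst_def)
next
  case (pCons c p)
  have "bsubst (pCons c p) u v = poly (map_poly bconst c) u + v * bsubst p u v"
    by (simp add: bsubst_def map_poly_pCons[where f = "\<lambda>q. poly (map_poly bconst q) u"])
  with pCons show ?case
    by (simp add: beval_poly_map_bconst) (simp add: beval_def)
qed

definition beval_vec :: "bipoly \<Rightarrow> complex^2 \<Rightarrow> complex" where
  "beval_vec P v = beval P (v$1) (v$2)"

definition beval_end :: "bipoly \<times> bipoly \<Rightarrow> complex^2 \<Rightarrow> complex^2" where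
  "beval_end F v = (\<chi> i. if i = 1 then beval_vec (fst F) v else beval_vec (snd F) v)"

definition det_cols :: "complex^2 \<Rightarrow> complex^2 \<Rightarrow> complex" where
  "det_cols w u = w$1 * u$2 - w$2 * u$1"

definition det_with_id :: "bipoly \<times> bipoly \<Rightarrow> bipoly" where
  "det_with_id F = fst F * bY - snd F * bX"

lemma beval_end_nth [simp]:
  "beval_end F v $ 1 = beval_vec (fst F) v"
  "beval_end F v $ 2 = beval_vec (snd F) v"
  by (simp_all add: beval_end_def)

lemma bipoly_eq_if_beval_vec_eq:
  assumes "\<And>v. beval_vec P v = beval_vec Q v"
  shows "P = Q"
  using assms[of "\<chi> i. if i = 1 then _ else _"] by (intro bipoly_eqI) (simp add: beval_vec_def)

lemma end_eq_if_beval_end_eq: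
  assumes "\<And>v. beval_end F v = beval_end F' v"
  shows "F = F'"
proof -
  have "beval_vec (fst F) v = beval_vec (fst F') v" "beval_vec (snd F) v = beval_vec (snd F') v"
    for v
    using assms[of v] by (metis beval_end_nth)+
  then show ?thesis
    by (simp add: prod_eq_iff bipoly_eq_if_beval_vec_eq)
qed

lemma matrix_vector_mult_2_nth:
  "((A::complex^2^2) *v v)$1 = A$1$1 * v$1 + A$1$2 * v$2"
  "((A::complex^2^2) *v v)$2 = A$2$1 * v$1 + A$2$2 * v$2"
  by (simp_all add: matrix_vector_mult_def sum_2)

lemma beval_vec_lin_comp: "beval_vec (lin_comp P h) v = beval_vec P (h *v v)"
  by (simp add: beval_vec_def lin_comp_def beval_bsubst matrix_vector_mult_2_nth)

lemma beval_end_act_end: "beval_end (act_end g F) v = g *v beval_end F (matrix_inv g *v v)"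
  by (simp add: vec_eq_iff forall_2 matrix_vector_mult_2_nth act_end_def Let_def
      beval_vec_def lin_comp_def beval_bsubst)

lemma beval_vec_det_with_id: "beval_vec (det_with_id F) v = det_cols (beval_end F v) v"
  by (simp add: beval_vec_def det_with_id_def det_cols_def)

lemma det_cols_mult: "det_cols (A *v w) (A *v u) = det A * det_cols w u"
  by (simp add: det_cols_def matrix_vector_mult_2_nth det_2 algebra_simps)

lemma matrix_inv_det_1:
  fixes g :: "complex^2^2"
  assumes "det g = 1"
  shows "g ** matrix_inv g = mat 1" "matrix_inv g ** g = mat 1"
proof -
  have "invertible g"
    using assms invertible_det_nz by force
  then have "\<exists>A'. g ** A' = mat 1 \<and> A' ** g = mat 1"
    by (simp add: invertible_def)
  then have "g ** matrix_inv g = mat 1 \<and> matrix_inv g ** g = mat 1"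
    unfolding matrix_inv_def by (rule someI_ex)
  then show "g ** matrix_inv g = mat 1" "matrix_inv g ** g = mat 1"
    by auto
qed

lemma matrix_inv_mult_det_1:
  fixes g k :: "complex^2^2"
  assumes "det g = 1" "det k = 1"
  shows "matrix_inv (k ** g) = matrix_inv g ** matrix_inv k"
proof -
  have "det (k ** g) = 1"
    using assms by (simp add: det_mul)
  then have "matrix_inv (k ** g) = matrix_inv (k ** g) ** ((k ** g) ** (matrix_inv g ** matrix_inv k))"
    by (metis assms matrix_inv_det_1(1) matrix_mul_assoc matrix_mul_rid)
  also have "\<dots> = matrix_inv g ** matrix_inv k"
    by (metis \<open>det (k ** g) = 1\<close> matrix_inv_det_1(2) matrix_mul_assoc matrix_mul_lid)
  finally show ?thesis .
qed

lemma act_end_act_end: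
  assumes "det g = 1" "det k = 1"
  shows "act_end k (act_end g F) = act_end (k ** g) F"
  by (intro end_eq_if_beval_end_eq)
    (simp add: beval_end_act_end matrix_vector_mul_assoc matrix_inv_mult_det_1 assms)

lemma act_poly_det_with_id:
  assumes "det g = 1"
  shows "act_poly g (det_with_id F) = det_with_id (act_end g F)"
proof (rule bipoly_eq_if_beval_vec_eq)
  fix v
  let ?h = "matrix_inv g"
  have "beval_vec (act_poly g (det_with_id F)) v = det_cols (beval_end F (?h *v v)) (?h *v v)"
    by (simp add: act_poly_def beval_vec_lin_comp beval_vec_det_with_id)
  also have "\<dots> = det_cols (g *v beval_end F (?h *v v)) (g *v (?h *v v))"
    by (simp add: det_cols_mult assms)
  also have "\<dots> = beval_vec (det_with_id (act_end g F)) v"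
    by (simp add: beval_vec_det_with_id beval_end_act_end matrix_vector_mul_assoc
        matrix_inv_det_1 assms)
  finally show "beval_vec (act_poly g (det_with_id F)) v = beval_vec (det_with_id (act_end g F)) v" .
qed

lemma beval_det_with_id_origin [simp]: "beval (det_with_id F) 0 0 = 0"
  by (simp add: det_with_id_def)

lemma det_with_id_surj_vanishing:
  assumes "beval P 0 0 = 0"
  shows "\<exists>F. det_with_id F = P"
proof -
  obtain p0 Q where P: "P = pCons p0 Q"
    by (cases P) auto
  have "poly p0 0 = 0"
    using assms by (simp add: P beval_def)
  then obtain r where "p0 = [:0, 1:] * r"
    by (auto simp: poly_eq_0_iff_dvd elim: dvdE)
  then have "det_with_id (Q, - [:r:]) = P"
    by (simp add: P det_with_id_def bX_def bY_def)
  then show ?thesis ..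
qed

lemma finite_subgroup_SL2_det:
  "finite_subgroup_SL2 G \<Longrightarrow> g \<in> G \<Longrightarrow> det g = 1"
  by (auto simp: finite_subgroup_SL2_def SL2_def)

lemma finite_subgroup_SL2_sum_left_mult:
  assumes G: "finite_subgroup_SL2 G" and k: "k \<in> G"
  shows "(\<Sum>g\<in>G. f (k ** g)) = sum f G"
proof -
  have det_k: "det k = 1"
    using G k by (rule finite_subgroup_SL2_det)
  have "inj_on ((**) k) G"
    by (rule inj_onI) (metis det_k matrix_inv_det_1(2) matrix_mul_assoc matrix_mul_lid)
  moreover have "(**) k ` G = G"
  proof
    show "(**) k ` G \<subseteq> G"
      using G k by (auto simp: finite_subgroup_SL2_def)
    show "G \<subseteq> (**) k ` G"
    proof
      fix g assume "g \<in> G"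
      then have "matrix_inv k ** g \<in> G"
        using G k by (auto simp: finite_subgroup_SL2_def)
      moreover have "g = k ** (matrix_inv k ** g)"
        by (simp add: matrix_mul_assoc matrix_inv_det_1(1)[OF det_k])
      ultimately show "g \<in> (**) k ` G"
        by blast
    qed
  qed
  ultimately show ?thesis
    using sum.reindex[of "(**) k" G f] by simp
qed

definition end_average :: "(complex^2^2) set \<Rightarrow> bipoly \<times> bipoly \<Rightarrow> bipoly \<times> bipoly" where
  "end_average G F = (\<Sum>g\<in>G. bconst (1 / card G) * fst (act_end g F),
                      \<Sum>g\<in>G. bconst (1 / card G) * snd (act_end g F))"

lemma beval_end_end_average:
  "beval_end (end_average G F) v = (1 / card G) *s (\<Sum>g\<in>G. beval_end (act_end g F) v)"
  by (simp add: vec_eq_iff forall_2 end_average_def beval_vec_def sum_distrib_left)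

lemma act_end_end_average:
  assumes G: "finite_subgroup_SL2 G" and k: "k \<in> G"
  shows "act_end k (end_average G F) = end_average G F"
proof (rule end_eq_if_beval_end_eq)
  fix v
  have "k *v (\<Sum>g\<in>G. beval_end (act_end g F) (matrix_inv k *v v))
      = (\<Sum>g\<in>G. beval_end (act_end k (act_end g F)) v)"
    by (simp add: vec.sum beval_end_act_end)
  also have "\<dots> = (\<Sum>g\<in>G. beval_end (act_end (k ** g) F) v)"
    by (intro sum.cong) (simp_all add: act_end_act_end finite_subgroup_SL2_det[OF G] k)
  also have "\<dots> = (\<Sum>g\<in>G. beval_end (act_end g F) v)"
    using finite_subgroup_SL2_sum_left_mult[OF G k] .
  finally show "beval_end (act_end k (end_average G F)) v = beval_end (end_average G F) v"
    by (simp add: beval_end_act_end beval_end_end_average vector_scalar_commute)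
qed

lemma det_with_id_end_average:
  assumes G: "finite_subgroup_SL2 G"
    and inv: "\<forall>g\<in>G. act_poly g (det_with_id F) = det_with_id F"
  shows "det_with_id (end_average G F) = det_with_id F"
proof -
  have "card G \<noteq> 0"
    using G by (auto simp: finite_subgroup_SL2_def)
  have "det_with_id (end_average G F)
      = (\<Sum>g\<in>G. bconst (1 / card G) * det_with_id (act_end g F))"
    by (simp add: end_average_def det_with_id_def sum_distrib_right right_diff_distrib
        sum_subtractf mult.assoc)
  also have "\<dots> = (\<Sum>g\<in>G. bconst (1 / card G) * det_with_id F)"
    by (intro sum.cong) (simp_all add: act_poly_det_with_id[symmetric] finite_subgroup_SL2_det[OF G] inv)
  also have "\<dots> = det_with_id F"
    using \<open>card G \<noteq> 0\<close> by (simp add: bconst_def of_nat_poly one_pCons[symmetric])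
  finally show ?thesis .
qed

theorem mainTheorem10:
  fixes G :: "(complex^2^2) set" and P :: bipoly
  assumes "finite_subgroup_SL2 G"
  shows "(beval P 0 0 = 0 \<and> (\<forall>g\<in>G. act_poly g P = P)) \<longleftrightarrow>
         (\<exists>f1 f2. (\<forall>g\<in>G. act_end g (f1, f2) = (f1, f2)) \<and> f1 * bY - f2 * bX = P)"
proof
  assume "beval P 0 0 = 0 \<and> (\<forall>g\<in>G. act_poly g P = P)"
  then obtain F where P: "det_with_id F = P"
    and inv: "\<forall>g\<in>G. act_poly g (det_with_id F) = det_with_id F"
    using det_with_id_surj_vanishing by blast
  have "\<forall>g\<in>G. act_end g (end_average G F) = end_average G F"
    using assms act_end_end_average by blast
  moreover have "det_with_id (end_average G F) = P"
    using assms inv P det_with_id_end_average by blast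
  ultimately show "\<exists>f1 f2. (\<forall>g\<in>G. act_end g (f1, f2) = (f1, f2)) \<and> f1 * bY - f2 * bX = P"
    by (metis det_with_id_def prod.collapse)
next
  assume "\<exists>f1 f2. (\<forall>g\<in>G. act_end g (f1, f2) = (f1, f2)) \<and> f1 * bY - f2 * bX = P"
  then obtain F where inv: "\<forall>g\<in>G. act_end g F = F" and P: "det_with_id F = P"
    by (auto simp: det_with_id_def)
  have "act_poly g P = P" if "g \<in> G" for g
    using that assms inv by (simp add: P[symmetric] act_poly_det_with_id finite_subgroup_SL2_det)
  then show "beval P 0 0 = 0 \<and> (\<forall>g\<in>G. act_poly g P = P)"
    using P by auto
qed

end
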